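(* Let $\varphi$ be any forecasting system (not necessarily computable or non-degenerate) and $\omega\in\Omega$. If $\omega$ is Schnorr test random for $\varphi$, then $\omega$ is Schnorr random for $\varphi$.
   Context: Notation: $\mathbb N_0=\{0,1,\dots\}$; $\Omega=\{0,1\}^{\mathbb N}$; $\mathbb S$ finite binary strings, $\square$ empty string, $|s|$ length, $\omega^n$ first $n$ entries of $\omega$; $[s]=\{\omega:\omega^{|s|}=s\}$, $[A]=\bigcup_{s\in A}[s]$; for $A\subseteq\mathbb N_0\times\mathbb S$, $A_n=\{s:(n,s)\in A\}$, $A_n^{<\ell}=\{s\in A_n:|s|<\ell\}$. $\mathcal I$: nonempty closed subintervals of $[0,1]$; $\overline E_I(f)=\max_{p\in I}[pf(1)+(1-p)f(0)]$. Forecasting system: any $\varphi:\mathbb S\to\mathcal I$. Supermartingale for $\varphi$: $M:\mathbb S\to\mathbb R$ with $\overline E_{\varphi(s)}(M(s\,\cdot))\le M(s)$ for all $s$; test supermartingale: non-negative with $M(\square)=1$. $\overline P_\varphi(G)=\inf\{M(\square):M\text{ supermartingale for }\varphi,\ \liminf_nM(\omega^n)\ge\mathbb 1_G(\omega)\ \forall\omega\}$. A real map $r:\mathbb S\to\mathbb R$ is computable if there is a recursive $q:\mathbb S\times\mathbb N_0\to\mathbb Q$ with $|r(s)-q(s,N)|\le2^{-N}$. A growth function is a recursive, non-decreasing, unbounded $\rho:\mathbb N_0\to\mathbb N_0$. $\omega$ is Schnorr random for $\varphi$ if $\limsup_n[T(\omega^n)-\rho(n)]\le0$ for all computable test supermartingales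 $T$ for $\varphi$ and all growth functions $\rho$. A Schnorr test for $\varphi$ is a recursive $A\subseteq\mathbb N_0\times\mathbb S$ with $\overline P_\varphi([A_n])\le2^{-n}$ for all $n$ and a recursive $e:\mathbb N_0^2\to\mathbb N_0$ with $\overline P_\varphi([A_n]\setminus[A_n^{<\ell}])\le2^{-N}$ for all $(N,n)$ and all $\ell\ge e(N,n)$. $\omega$ is Schnorr test random if $\omega\notin\bigcap_n[A_n]$ for all Schnorr tests $A$ for $\varphi$. *)

theory Defs
  imports "HOL-Analysis.Analysis" "HOL-Library.Nat_Bijection"
begin

datatype recf =
    Zf
  | Sf
  | Proj nat
  | Comp recf "recf list"
  | Pr recf recf
  | Mn recf

inductive calc :: "recf \<Rightarrow> nat list \<Rightarrow> nat \<Rightarrow> bool" where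
  calc_zero: "calc Zf xs 0"
| calc_succ: "calc Sf (x # xs) (Suc x)"
| calc_proj: "i < length xs \<Longrightarrow> calc (Proj i) xs (xs ! i)"
| calc_comp: "list_all2 (\<lambda>g y. calc g xs y) gs ys \<Longrightarrow> calc f ys z \<Longrightarrow> calc (Comp f gs) xs z"
| calc_pr0: "calc f xs z \<Longrightarrow> calc (Pr f g) (0 # xs) z"
| calc_prS: "calc (Pr f g) (n # xs) y \<Longrightarrow> calc g (n # y # xs) z \<Longrightarrow> calc (Pr f g) (Suc n # xs) z"
| calc_mn: "calc f (n # xs) 0 \<Longrightarrow> (\<forall>m<n. \<exists>y. calc f (m # xs) (Suc y)) \<Longrightarrow> calc (Mn f) xs n"
monos list.rel_mono

definition recursive_fn :: "nat \<Rightarrow> (nat list \<Rightarrow> nat) \<Rightarrow> bool" where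
  "recursive_fn k f \<longleftrightarrow> (\<exists>c. \<forall>xs. length xs = k \<longrightarrow> calc c xs (f xs))"

text \<open>Bijective encoding of finite binary strings (True = 1, False = 0) as naturals.\<close>
fun str_enc :: "bool list \<Rightarrow> nat" where
  "str_enc [] = 0"
| "str_enc (b # s) = 2 * str_enc s + 1 + (if b then 1 else 0)"

definition rat_dec :: "nat \<Rightarrow> real" where
  "rat_dec m = (case prod_decode m of (a, b) \<Rightarrow> of_int (int_decode a) / of_nat (Suc b))"

definition computable_real_map :: "(bool list \<Rightarrow> real) \<Rightarrow> bool" where
  "computable_real_map r \<longleftrightarrow>
     (\<exists>h. recursive_fn 2 h \<and>
        (\<forall>s N. \<bar>r s - rat_dec (h [str_enc s, N])\<bar> \<le> (1/2) ^ N))"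

definition recursive_set :: "(nat \<times> bool list) set \<Rightarrow> bool" where
  "recursive_set A \<longleftrightarrow>
     recursive_fn 2 (\<lambda>xs. if (xs ! 0, inv str_enc (xs ! 1)) \<in> A then 1 else 0)"

definition recursive_fn2 :: "(nat \<Rightarrow> nat \<Rightarrow> nat) \<Rightarrow> bool" where
  "recursive_fn2 e \<longleftrightarrow> recursive_fn 2 (\<lambda>xs. e (xs ! 0) (xs ! 1))"

definition growth_function :: "(nat \<Rightarrow> nat) \<Rightarrow> bool" where
  "growth_function \<rho> \<longleftrightarrow> recursive_fn 1 (\<lambda>xs. \<rho> (xs ! 0)) \<and> mono \<rho> \<and> (\<forall>B. \<exists>n. \<rho> n > B)"

definition pfx :: "(nat \<Rightarrow> bool) \<Rightarrow> nat \<Rightarrow> bool list" where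
  "pfx \<omega> n = map \<omega> [0..<n]"

definition cyl :: "bool list set \<Rightarrow> (nat \<Rightarrow> bool) set" where
  "cyl S = {\<omega>. \<exists>s\<in>S. pfx \<omega> (length s) = s}"

definition sect :: "(nat \<times> bool list) set \<Rightarrow> nat \<Rightarrow> bool list set" where
  "sect A n = {s. (n, s) \<in> A}"

definition sect_lt :: "(nat \<times> bool list) set \<Rightarrow> nat \<Rightarrow> nat \<Rightarrow> bool list set" where
  "sect_lt A n l = {s. (n, s) \<in> A \<and> length s < l}"

definition is_interval :: "real set \<Rightarrow> bool" where
  "is_interval I \<longleftrightarrow> (\<exists>a b. 0 \<le> a \<and> a \<le> b \<and> b \<le> 1 \<and> I = {a..b})"

definition forecasting_system :: "(bool list \<Rightarrow> real set) \<Rightarrow> bool" where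
  "forecasting_system \<phi> \<longleftrightarrow> (\<forall>s. is_interval (\<phi> s))"

text \<open>Upper expectation (maximum is attained as I is compact and nonempty).\<close>
definition upper_E :: "real set \<Rightarrow> (bool \<Rightarrow> real) \<Rightarrow> real" where
  "upper_E I f = (SUP p\<in>I. p * f True + (1 - p) * f False)"

definition supermartingale :: "(bool list \<Rightarrow> real set) \<Rightarrow> (bool list \<Rightarrow> real) \<Rightarrow> bool" where
  "supermartingale \<phi> M \<longleftrightarrow> (\<forall>s. upper_E (\<phi> s) (\<lambda>x. M (s @ [x])) \<le> M s)"

definition test_supermartingale :: "(bool list \<Rightarrow> real set) \<Rightarrow> (bool list \<Rightarrow> real) \<Rightarrow> bool" where
  "test_supermartingale \<phi> T \<longleftrightarrow> supermartingale \<phi> T \<and> (\<forall>s. T s \<ge> 0) \<and> T [] = 1"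

definition upper_prob :: "(bool list \<Rightarrow> real set) \<Rightarrow> (nat \<Rightarrow> bool) set \<Rightarrow> ereal" where
  "upper_prob \<phi> G = Inf {ereal (M []) | M. supermartingale \<phi> M \<and>
      (\<forall>\<omega>. liminf (\<lambda>n. ereal (M (pfx \<omega> n))) \<ge> ereal (indicator G \<omega>))}"

definition schnorr_random :: "(bool list \<Rightarrow> real set) \<Rightarrow> (nat \<Rightarrow> bool) \<Rightarrow> bool" where
  "schnorr_random \<phi> \<omega> \<longleftrightarrow>
     (\<forall>T \<rho>. test_supermartingale \<phi> T \<and> computable_real_map T \<and> growth_function \<rho> \<longrightarrow>
        limsup (\<lambda>n. ereal (T (pfx \<omega> n) - real (\<rho> n))) \<le> 0)"

definition schnorr_test :: "(bool list \<Rightarrow> real set) \<Rightarrow> (nat \<times> bool list) set \<Rightarrow> bool" where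
  "schnorr_test \<phi> A \<longleftrightarrow> recursive_set A \<and>
     (\<forall>n. upper_prob \<phi> (cyl (sect A n)) \<le> ereal ((1/2) ^ n)) \<and>
     (\<exists>e. recursive_fn2 e \<and>
        (\<forall>N n l. l \<ge> e N n \<longrightarrow>
           upper_prob \<phi> (cyl (sect A n) - cyl (sect_lt A n l)) \<le> ereal ((1/2) ^ N)))"

definition schnorr_test_random :: "(bool list \<Rightarrow> real set) \<Rightarrow> (nat \<Rightarrow> bool) \<Rightarrow> bool" where
  "schnorr_test_random \<phi> \<omega> \<longleftrightarrow> (\<forall>A. schnorr_test \<phi> A \<longrightarrow> \<omega> \<notin> (\<Inter>n. cyl (sect A n)))"

end

theory Submission
  imports Defs
begin

text \<open>Suppose a computable test supermartingale T and a growth function \<rho> satisfy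
  T(\<omega>^n) > \<rho>(n) infinitely often. Let A_n consist of the strings s with \<rho>(|s|) > 2^n on
  which a 1/4-approximation of T(s) exceeds \<rho>(|s|) - 1/2; this is decidable, and T \<ge> 2^n on A_n.
  Stopping T on first entering A_n and applying Ville's inequality bounds the upper probability
  of [A_n] by 2^-n. The same argument bounds the part of [A_n] generated by strings of length
  at least l by 2^-N as soon as \<rho>(l) > 2^N, which yields a recursive modulus. So A is a
  Schnorr test, and \<omega> lies in every [A_n].\<close>

subsection \<open>Closure properties of recursive functions\<close>

lemma recursive_fn_cong:
  "recursive_fn k f \<Longrightarrow> (\<And>xs. length xs = k \<Longrightarrow> f xs = g xs) \<Longrightarrow> recursive_fn k g"
  unfolding recursive_fn_def by metis

lemma recursive_fn_proj: "i < k \<Longrightarrow> recursive_fn k (\<lambda>xs. xs ! i)"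
  unfolding recursive_fn_def by (auto intro: calc_proj)

lemma recursive_fn_Suc: "recursive_fn k f \<Longrightarrow> recursive_fn k (\<lambda>xs. Suc (f xs))"
  unfolding recursive_fn_def
  by (metis calc_comp calc_succ list.rel_inject(2) list_all2_Nil)

lemma recursive_fn_const: "recursive_fn k (\<lambda>_. c)"
proof (induction c)
  case 0
  then show ?case unfolding recursive_fn_def by (auto intro: calc_zero)
qed (rule recursive_fn_Suc)

lemma recursive_fn_comp:
  assumes g: "recursive_fn (length fs) g" and fs: "\<forall>f\<in>set fs. recursive_fn k f"
  shows "recursive_fn k (\<lambda>xs. g (map (\<lambda>f. f xs) fs))"
proof -
  obtain cg where cg: "\<forall>ys. length ys = length fs \<longrightarrow> calc cg ys (g ys)"
    using g unfolding recursive_fn_def by auto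
  have "\<forall>f\<in>set fs. \<exists>c. \<forall>xs. length xs = k \<longrightarrow> calc c xs (f xs)"
    using fs unfolding recursive_fn_def .
  then obtain cs where cs: "list_all2 (\<lambda>f c. \<forall>xs. length xs = k \<longrightarrow> calc c xs (f xs)) fs cs"
    by (induction fs) (auto intro: list_all2_Cons[THEN iffD2])
  have "calc (Comp cg cs) xs (g (map (\<lambda>f. f xs) fs))" if "length xs = k" for xs
  proof (rule calc_comp)
    show "list_all2 (\<lambda>c y. calc c xs y) cs (map (\<lambda>f. f xs) fs)"
      using cs that by (auto simp: list_all2_conv_all_nth)
  qed (use cg in auto)
  then show ?thesis unfolding recursive_fn_def by auto
qed

lemma recursive_fn_comp1:
  "recursive_fn 1 g \<Longrightarrow> recursive_fn k f \<Longrightarrow> recursive_fn k (\<lambda>xs. g [f xs])"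
  using recursive_fn_comp[of "[f]" g k] by simp

lemma recursive_fn_comp2:
  "recursive_fn 2 g \<Longrightarrow> recursive_fn k f1 \<Longrightarrow> recursive_fn k f2 \<Longrightarrow>
    recursive_fn k (\<lambda>xs. g [f1 xs, f2 xs])"
  using recursive_fn_comp[of "[f1, f2]" g k] by (simp add: numeral_2_eq_2)

lemma recursive_fn_prim_rec:
  assumes f0: "recursive_fn k f0" and h: "recursive_fn (Suc (Suc k)) h"
    and f_0: "\<And>ys. length ys = k \<Longrightarrow> f (0 # ys) = f0 ys"
    and f_Suc: "\<And>n ys. length ys = k \<Longrightarrow> f (Suc n # ys) = h (n # f (n # ys) # ys)"
  shows "recursive_fn (Suc k) f"
proof -
  obtain c0 where c0: "\<forall>ys. length ys = k \<longrightarrow> calc c0 ys (f0 ys)"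
    using f0 unfolding recursive_fn_def by auto
  obtain ch where ch: "\<forall>ys. length ys = Suc (Suc k) \<longrightarrow> calc ch ys (h ys)"
    using h unfolding recursive_fn_def by auto
  have calc_Pr: "calc (Pr c0 ch) (n # ys) (f (n # ys))" if "length ys = k" for n ys
    using that by (induction n) (auto intro: calc_pr0 calc_prS simp: c0 ch f_0 f_Suc)
  show ?thesis unfolding recursive_fn_def
  proof (intro exI allI impI)
    fix xs :: "nat list"
    assume "length xs = Suc k"
    then show "calc (Pr c0 ch) xs (f xs)"
      using calc_Pr by (cases xs) auto
  qed
qed

lemma recursive_fn_add:
  assumes "recursive_fn k f" "recursive_fn k g"
  shows "recursive_fn k (\<lambda>xs. f xs + g xs)"
proof -
  have "recursive_fn 2 (\<lambda>xs. xs ! 0 + xs ! 1)"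
    unfolding numeral_2_eq_2
  proof (rule recursive_fn_prim_rec)
    show "recursive_fn (Suc 0) (\<lambda>ys. ys ! 0)" by (rule recursive_fn_proj) simp
    show "recursive_fn (Suc (Suc (Suc 0))) (\<lambda>ys. Suc (ys ! 1))"
      by (intro recursive_fn_Suc recursive_fn_proj) simp
  qed simp_all
  from recursive_fn_comp2[OF this assms] show ?thesis by simp
qed

lemma recursive_fn_mult:
  assumes "recursive_fn k f" "recursive_fn k g"
  shows "recursive_fn k (\<lambda>xs. f xs * g xs)"
proof -
  have "recursive_fn 2 (\<lambda>xs. xs ! 0 * xs ! 1)"
    unfolding numeral_2_eq_2
  proof (rule recursive_fn_prim_rec)
    show "recursive_fn (Suc 0) (\<lambda>_. 0)" by (rule recursive_fn_const)
    show "recursive_fn (Suc (Suc (Suc 0))) (\<lambda>ys. ys ! 2 + ys ! 1)"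
      by (intro recursive_fn_add recursive_fn_proj) simp_all
  qed (simp_all add: numeral_2_eq_2)
  from recursive_fn_comp2[OF this assms] show ?thesis by simp
qed

lemma recursive_fn_diff:
  assumes "recursive_fn k f" "recursive_fn k g"
  shows "recursive_fn k (\<lambda>xs. f xs - g xs)"
proof -
  have pred: "recursive_fn 1 (\<lambda>xs. xs ! 0 - 1)"
    unfolding One_nat_def
  proof (rule recursive_fn_prim_rec)
    show "recursive_fn 0 (\<lambda>_. 0)" by (rule recursive_fn_const)
    show "recursive_fn (Suc (Suc 0)) (\<lambda>ys. ys ! 0)" by (rule recursive_fn_proj) simp
  qed simp_all
  have "recursive_fn 2 (\<lambda>xs. xs ! 1 - xs ! 0)"
    unfolding numeral_2_eq_2
  proof (rule recursive_fn_prim_rec)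
    show "recursive_fn (Suc 0) (\<lambda>ys. ys ! 0)" by (rule recursive_fn_proj) simp
    show "recursive_fn (Suc (Suc (Suc 0))) (\<lambda>ys. [ys ! 1] ! 0 - 1)"
      by (intro recursive_fn_comp1[OF pred] recursive_fn_proj) simp
  qed simp_all
  from recursive_fn_comp2[OF this assms(2,1)] show ?thesis by simp
qed

lemma recursive_fn_power2:
  assumes "recursive_fn k f"
  shows "recursive_fn k (\<lambda>xs. 2 ^ f xs)"
proof -
  have "recursive_fn 1 (\<lambda>xs. 2 ^ (xs ! 0))"
    unfolding One_nat_def
  proof (rule recursive_fn_prim_rec)
    show "recursive_fn 0 (\<lambda>_. 1)" by (rule recursive_fn_const)
    show "recursive_fn (Suc (Suc 0)) (\<lambda>ys. ys ! 1 + ys ! 1)"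
      by (intro recursive_fn_add recursive_fn_proj) simp_all
  qed simp_all
  from recursive_fn_comp1[OF this assms] show ?thesis by simp
qed

lemma recursive_fn_mod2:
  assumes "recursive_fn k f"
  shows "recursive_fn k (\<lambda>xs. f xs mod 2)"
proof -
  have "recursive_fn 1 (\<lambda>xs. xs ! 0 mod 2)"
    unfolding One_nat_def
  proof (rule recursive_fn_prim_rec)
    show "recursive_fn 0 (\<lambda>_. 0)" by (rule recursive_fn_const)
    show "recursive_fn (Suc (Suc 0)) (\<lambda>ys. 1 - ys ! 1)"
      by (intro recursive_fn_diff recursive_fn_const recursive_fn_proj) simp
  qed (simp_all add: mod_Suc)
  from recursive_fn_comp1[OF this assms] show ?thesis by simp
qed

lemma recursive_fn_Least_le:
  assumes f: "recursive_fn (Suc k) f" and g: "recursive_fn (Suc k) g"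
    and ex: "\<And>xs. length xs = k \<Longrightarrow> \<exists>n. f (n # xs) \<le> g (n # xs)"
  shows "recursive_fn k (\<lambda>xs. LEAST n. f (n # xs) \<le> g (n # xs))"
proof -
  obtain c where c: "\<And>ys. length ys = Suc k \<Longrightarrow> calc c ys (f ys - g ys)"
    using recursive_fn_diff[OF f g] unfolding recursive_fn_def by auto
  have "calc (Mn c) xs (LEAST n. f (n # xs) \<le> g (n # xs))" if xs: "length xs = k" for xs
  proof (rule calc_mn)
    let ?n = "LEAST n. f (n # xs) \<le> g (n # xs)"
    have "f (?n # xs) - g (?n # xs) = 0"
      using LeastI_ex[OF ex[OF xs]] by simp
    then show "calc c (?n # xs) 0"
      using c[of "?n # xs"] xs by simp
    show "\<forall>m<?n. \<exists>y. calc c (m # xs) (Suc y)"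
    proof (intro allI impI)
      fix m
      assume "m < ?n"
      then have "f (m # xs) - g (m # xs) = Suc (f (m # xs) - g (m # xs) - 1)"
        using not_less_Least by fastforce
      then show "\<exists>y. calc c (m # xs) (Suc y)"
        using c[of "m # xs"] xs by (metis length_Cons)
    qed
  qed
  then show ?thesis unfolding recursive_fn_def by auto
qed

lemma recursive_fn_if_le:
  assumes "recursive_fn k f" "recursive_fn k g"
  shows "recursive_fn k (\<lambda>xs. if f xs \<le> g xs then 1 else 0)"
proof -
  have "recursive_fn k (\<lambda>xs. 1 - (f xs - g xs))"
    by (intro recursive_fn_diff recursive_fn_const assms)
  then show ?thesis
    by (rule recursive_fn_cong) auto
qed

lemma recursive_fn_if_even:
  assumes "recursive_fn k f"
  shows "recursive_fn k (\<lambda>xs. if even (f xs) then 1 else 0)"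
proof -
  have "recursive_fn k (\<lambda>xs. 1 - f xs mod 2)"
    by (intro recursive_fn_diff recursive_fn_mod2 recursive_fn_const assms)
  then show ?thesis
    by (rule recursive_fn_cong) (simp add: even_iff_mod_2_eq_zero)
qed

lemma recursive_fn_if_conj:
  assumes "recursive_fn k (\<lambda>xs. if P xs then 1 else 0)" "recursive_fn k (\<lambda>xs. if Q xs then 1 else 0)"
  shows "recursive_fn k (\<lambda>xs. if P xs \<and> Q xs then 1 else 0)"
  using recursive_fn_mult[OF assms] by (rule recursive_fn_cong) simp

subsection \<open>Decoding strings and pairs\<close>

lemma str_enc_bounds: "2 ^ length s \<le> str_enc s + 1" "str_enc s + 2 \<le> 2 ^ (length s + 1)"
  by (induction s) auto

lemma inj_str_enc: "inj str_enc"
proof (rule injI)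
  fix s t :: "bool list"
  show "str_enc s = str_enc t \<Longrightarrow> s = t"
  proof (induction s arbitrary: t)
    case Nil
    then show ?case by (cases t) auto
  next
    case (Cons b s)
    then obtain c u where t: "t = c # u"
      by (cases t) auto
    with Cons.prems have "b = c \<and> str_enc s = str_enc u"
      by (cases b; cases c; simp; presburger)
    with Cons.IH t show ?case
      by simp
  qed
qed

lemma surj_str_enc: "surj str_enc"
proof -
  have "\<exists>s. str_enc s = x" for x
  proof (induction x rule: less_induct)
    case (less x)
    consider "x = 0" | "odd x" | "even x" "x \<noteq> 0"
      by blast
    then show ?case
    proof cases
      case 1
      then show ?thesis
        by (intro exI[of _ "[]"]) simp
    next
      case 2
      define y where "y = x div 2"
      have x: "x = 2 * y + 1"
        using 2 unfolding y_def by presburger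
      then obtain s where "str_enc s = y"
        using less[of y] by auto
      with x show ?thesis
        by (intro exI[of _ "False # s"]) simp
    next
      case 3
      define y where "y = (x - 2) div 2"
      have x: "x = 2 * y + 2"
        using 3 unfolding y_def by presburger
      then obtain s where "str_enc s = y"
        using less[of y] by auto
      with x show ?thesis
        by (intro exI[of _ "True # s"]) simp
    qed
  qed
  then show ?thesis
    unfolding surj_def by metis
qed

text \<open>The codes of the strings of length k fill the interval from 2^k - 1 to 2^(k+1) - 2.\<close>

definition code_length :: "nat \<Rightarrow> nat" where
  "code_length x = (LEAST k. x + 2 \<le> 2 ^ (k + 1))"

lemma code_length_str_enc: "code_length (str_enc s) = length s"
  unfolding code_length_def
proof (rule Least_equality)
  show "str_enc s + 2 \<le> 2 ^ (length s + 1)"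
    by (rule str_enc_bounds)
  fix k
  assume "str_enc s + 2 \<le> 2 ^ (k + 1)"
  then have "(2::nat) ^ length s < 2 ^ (k + 1)"
    using str_enc_bounds(1)[of s] by linarith
  then have "length s < k + 1"
    by (rule power_less_imp_less_exp[rotated]) simp
  then show "length s \<le> k"
    by simp
qed

lemma recursive_fn_code_length:
  assumes "recursive_fn k f"
  shows "recursive_fn k (\<lambda>xs. code_length (f xs))"
proof -
  have "recursive_fn (Suc 1) (\<lambda>ys. ys ! 1 + 2)"
    by (intro recursive_fn_add recursive_fn_proj recursive_fn_const) simp
  moreover have "recursive_fn (Suc 1) (\<lambda>ys. 2 ^ (ys ! 0 + 1))"
    by (intro recursive_fn_power2 recursive_fn_add recursive_fn_proj recursive_fn_const) simp
  moreover have "\<exists>n. xs ! 0 + 2 \<le> 2 ^ (n + 1)" for xs :: "nat list"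
    using less_exp[of "xs ! 0 + 2"] by (intro exI[of _ "xs ! 0 + 1"]) simp
  ultimately have "recursive_fn 1 (\<lambda>xs. LEAST n. xs ! 0 + 2 \<le> 2 ^ (n + 1))"
    using recursive_fn_Least_le[of 1 "\<lambda>ys. ys ! 1 + 2" "\<lambda>ys. 2 ^ (ys ! 0 + 1)"] by simp
  then have "recursive_fn 1 (\<lambda>xs. code_length (xs ! 0))"
    by (simp add: code_length_def)
  from recursive_fn_comp1[OF this assms] show ?thesis by simp
qed

text \<open>Inverting prod_encode: the pair (a, b) sits on the diagonal a + b at offset a.\<close>

definition diagonal_of :: "nat \<Rightarrow> nat" where
  "diagonal_of m = (LEAST k. 2 * m + 2 \<le> (k + 1) * (k + 2))"

definition diagonal_offset :: "nat \<Rightarrow> nat \<Rightarrow> nat" where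
  "diagonal_offset m k = (LEAST a. 2 * m \<le> 2 * a + k * (k + 1))"

lemma double_prod_encode: "2 * prod_encode (a, b) = (a + b) * (a + b + 1) + 2 * a"
proof -
  have double_triangle: "2 * triangle k = k * (k + 1)" for k
    by (induction k) auto
  show ?thesis
    by (simp add: prod_encode_def double_triangle algebra_simps)
qed

lemma diagonal_of_prod_encode: "diagonal_of (prod_encode (a, b)) = a + b"
  unfolding diagonal_of_def
proof (rule Least_equality)
  show "2 * prod_encode (a, b) + 2 \<le> (a + b + 1) * (a + b + 2)"
    using double_prod_encode[of a b] by (simp add: algebra_simps)
  fix k
  assume k: "2 * prod_encode (a, b) + 2 \<le> (k + 1) * (k + 2)"
  show "a + b \<le> k"
  proof (rule ccontr)
    assume "\<not> a + b \<le> k"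
    then have "(k + 1) * (k + 2) \<le> (a + b) * (a + b + 1)"
      by (intro mult_le_mono) auto
    with k show False
      using double_prod_encode[of a b] by simp
  qed
qed

lemma diagonal_offset_prod_encode: "diagonal_offset (prod_encode (a, b)) (a + b) = a"
  unfolding diagonal_offset_def
  by (rule Least_equality) (simp_all add: double_prod_encode)

lemma prod_decode_eq_diagonal:
  "prod_decode m = (diagonal_offset m (diagonal_of m), diagonal_of m - diagonal_offset m (diagonal_of m))"
proof -
  obtain a b where "prod_decode m = (a, b)"
    by fastforce
  then have "m = prod_encode (a, b)"
    by (metis prod_decode_inverse)
  then show ?thesis
    by (simp add: diagonal_of_prod_encode diagonal_offset_prod_encode)
qed

lemma recursive_fn_prod_decode:
  assumes "recursive_fn k f"
  shows "recursive_fn k (\<lambda>xs. fst (prod_decode (f xs)))" "recursive_fn k (\<lambda>xs. snd (prod_decode (f xs)))"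
proof -
  have "recursive_fn (Suc 1) (\<lambda>ys. 2 * ys ! 1 + 2)"
    by (intro recursive_fn_add recursive_fn_mult recursive_fn_proj recursive_fn_const) simp
  moreover have "recursive_fn (Suc 1) (\<lambda>ys. (ys ! 0 + 1) * (ys ! 0 + 2))"
    by (intro recursive_fn_add recursive_fn_mult recursive_fn_proj recursive_fn_const) simp_all
  moreover have "\<exists>n. 2 * xs ! 0 + 2 \<le> (n + 1) * (n + 2)" for xs :: "nat list"
    by (intro exI[of _ "2 * xs ! 0"]) simp
  ultimately have "recursive_fn 1 (\<lambda>xs. diagonal_of (xs ! 0))"
    using recursive_fn_Least_le[of 1 "\<lambda>ys. 2 * ys ! 1 + 2" "\<lambda>ys. (ys ! 0 + 1) * (ys ! 0 + 2)"]
    by (simp add: diagonal_of_def)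
  from recursive_fn_comp1[OF this assms] have diag: "recursive_fn k (\<lambda>xs. diagonal_of (f xs))"
    by simp
  have "recursive_fn (Suc 2) (\<lambda>ys. 2 * ys ! 1)"
    by (intro recursive_fn_mult recursive_fn_proj recursive_fn_const) simp
  moreover have "recursive_fn (Suc 2) (\<lambda>ys. 2 * ys ! 0 + ys ! 2 * (ys ! 2 + 1))"
    by (intro recursive_fn_add recursive_fn_mult recursive_fn_proj recursive_fn_const) simp_all
  moreover have "\<exists>n. 2 * xs ! 0 \<le> 2 * n + xs ! 1 * (xs ! 1 + 1)" for xs :: "nat list"
    by (intro exI[of _ "xs ! 0"]) simp
  ultimately have "recursive_fn 2 (\<lambda>xs. diagonal_offset (xs ! 0) (xs ! 1))"
    using recursive_fn_Least_le[of 2 "\<lambda>ys. 2 * ys ! 1" "\<lambda>ys. 2 * ys ! 0 + ys ! 2 * (ys ! 2 + 1)"]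
    by (simp add: diagonal_offset_def numeral_3_eq_3 numeral_2_eq_2)
  from recursive_fn_comp2[OF this assms diag]
  have offset: "recursive_fn k (\<lambda>xs. diagonal_offset (f xs) (diagonal_of (f xs)))"
    by simp
  show "recursive_fn k (\<lambda>xs. fst (prod_decode (f xs)))"
    using offset by (simp add: prod_decode_eq_diagonal)
  show "recursive_fn k (\<lambda>xs. snd (prod_decode (f xs)))"
    using recursive_fn_diff[OF diag offset] by (simp add: prod_decode_eq_diagonal)
qed

text \<open>Comparing a decoded rational with r - 1/2 in integer arithmetic; an odd first
  component encodes a negative numerator and always lies below r - 1/2 \<ge> 1/2.\<close>

lemma half_below_rat_dec_iff:
  assumes "r \<ge> 1"
  shows "real r - 1/2 \<le> rat_dec m \<longleftrightarrow>
    even (fst (prod_decode m)) \<and>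
    2 * r * (snd (prod_decode m) + 1) \<le> fst (prod_decode m) + snd (prod_decode m) + 1"
proof -
  obtain a b where ab: "prod_decode m = (a, b)"
    by fastforce
  have int_decode_a: "int_decode a = (if even a then int (a div 2) else - int (a div 2) - 1)"
    by (simp add: int_decode_def sum_decode_def)
  show ?thesis
  proof (cases "even a")
    case True
    then obtain k where a: "a = 2 * k"
      by blast
    have "2 * r * (b + 1) \<le> a + b + 1 \<longleftrightarrow> real (2 * r * (b + 1)) \<le> real (2 * k + b + 1)"
      unfolding a by linarith
    also have "\<dots> \<longleftrightarrow> (real r - 1/2) * real (Suc b) \<le> real k"
    proof -
      have "(real r - 1/2) * real (Suc b) = (real (2 * r * (b + 1)) - real (b + 1)) / 2"
        by (simp add: algebra_simps)
      then show ?thesis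
        by (simp del: of_nat_Suc of_nat_add of_nat_mult) linarith
    qed
    also have "\<dots> \<longleftrightarrow> real r - 1/2 \<le> real k / real (Suc b)"
      by (simp add: pos_le_divide_eq del: of_nat_Suc)
    finally have "2 * r * (b + 1) \<le> a + b + 1 \<longleftrightarrow> real r - 1/2 \<le> real k / real (Suc b)" .
    moreover have "int_decode a = int k"
      using int_decode_a a by simp
    ultimately show ?thesis
      using True by (simp add: rat_dec_def ab del: of_nat_Suc)
  next
    case False
    then have "of_int (int_decode a) / real (Suc b) < 0"
      by (simp add: int_decode_a divide_neg_pos del: of_nat_Suc)
    moreover have "real r - 1/2 > 0"
      using assms by simp
    ultimately show ?thesis
      using False by (simp add: rat_dec_def ab)
  qed
qed

subsection \<open>Ville's inequality\<close>

lemma upper_E_interval: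
  assumes "a \<le> b"
  shows "upper_E {a..b} f = max (a * f True + (1 - a) * f False) (b * f True + (1 - b) * f False)"
  unfolding upper_E_def
proof (rule cSup_eq_maximum)
  show "max (a * f True + (1 - a) * f False) (b * f True + (1 - b) * f False)
      \<in> (\<lambda>p. p * f True + (1 - p) * f False) ` {a..b}"
    using assms by (auto simp: max_def)
  fix y
  assume "y \<in> (\<lambda>p. p * f True + (1 - p) * f False) ` {a..b}"
  then obtain p where p: "a \<le> p" "p \<le> b" and y: "y = f False + p * (f True - f False)"
    by (auto simp: algebra_simps)
  show "y \<le> max (a * f True + (1 - a) * f False) (b * f True + (1 - b) * f False)"
  proof (cases "f True - f False \<ge> 0")
    case True
    then have "p * (f True - f False) \<le> b * (f True - f False)"
      using p by (intro mult_right_mono)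
    then show ?thesis
      using y by (simp add: algebra_simps max_def)
  next
    case False
    then have "p * (f True - f False) \<le> a * (f True - f False)"
      using p by (intro mult_right_mono_neg) auto
    then show ?thesis
      using y by (simp add: algebra_simps max_def)
  qed
qed

lemma upper_E_const:
  assumes "forecasting_system \<phi>"
  shows "upper_E (\<phi> s) (\<lambda>_. c) = c"
proof -
  obtain a b where "a \<le> b" "\<phi> s = {a..b}"
    using assms unfolding forecasting_system_def is_interval_def by blast
  then show ?thesis
    by (simp add: upper_E_interval algebra_simps)
qed

lemma upper_E_divide:
  assumes "forecasting_system \<phi>" "c > 0"
  shows "upper_E (\<phi> s) (\<lambda>x. f x / c) = upper_E (\<phi> s) f / c"
proof -
  obtain a b where "a \<le> b" "\<phi> s = {a..b}"
    using assms(1) unfolding forecasting_system_def is_interval_def by blast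
  moreover have "p * (f True / c) + (1 - p) * (f False / c) = (p * f True + (1 - p) * f False) / c"
    for p
    using assms(2) by (simp add: field_simps)
  ultimately show ?thesis
    using assms(2) by (simp add: upper_E_interval max_divide_distrib_right)
qed

definition has_prefix_in :: "bool list set \<Rightarrow> bool list \<Rightarrow> bool" where
  "has_prefix_in S s \<longleftrightarrow> (\<exists>j \<le> length s. take j s \<in> S)"

definition stopped_at :: "bool list set \<Rightarrow> bool list \<Rightarrow> bool list" where
  "stopped_at S s = (if has_prefix_in S s then take (LEAST j. take j s \<in> S) s else s)"

lemma has_prefix_in_Least:
  assumes "has_prefix_in S s"
  shows "(LEAST j. take j s \<in> S) \<le> length s" "take (LEAST j. take j s \<in> S) s \<in> S"
proof -
  obtain j where j: "j \<le> length s" "take j s \<in> S"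
    using assms unfolding has_prefix_in_def by auto
  show "(LEAST j. take j s \<in> S) \<le> length s"
    using Least_le[of "\<lambda>j. take j s \<in> S", OF j(2)] j(1) by simp
  show "take (LEAST j. take j s \<in> S) s \<in> S"
    using j(2) by (rule LeastI)
qed

lemma stopped_at_snoc:
  "stopped_at S (s @ [x]) = (if has_prefix_in S s then stopped_at S s else s @ [x])"
proof (cases "has_prefix_in S s")
  case True
  define j0 where "j0 = (LEAST j. take j s \<in> S)"
  have j0: "j0 \<le> length s" "take j0 s \<in> S"
    using has_prefix_in_Least[OF True] by (simp_all add: j0_def)
  then have "has_prefix_in S (s @ [x])"
    unfolding has_prefix_in_def by (intro exI[of _ j0]) auto
  moreover have "(LEAST j. take j (s @ [x]) \<in> S) = j0"
  proof (rule Least_equality)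
    show "take j0 (s @ [x]) \<in> S"
      using j0 by simp
    fix j
    assume j: "take j (s @ [x]) \<in> S"
    show "j0 \<le> j"
    proof (rule ccontr)
      assume "\<not> j0 \<le> j"
      with j j0(1) have "take j s \<in> S" "j < j0"
        by simp_all
      then show False
        unfolding j0_def using not_less_Least by blast
    qed
  qed
  ultimately show ?thesis
    using True j0 by (simp add: stopped_at_def j0_def)
next
  case False
  have "take (LEAST j. take j (s @ [x]) \<in> S) (s @ [x]) = s @ [x]" if "has_prefix_in S (s @ [x])"
  proof -
    have "\<not> (LEAST j. take j (s @ [x]) \<in> S) \<le> length s"
      using False has_prefix_in_Least(2)[OF that] unfolding has_prefix_in_def by auto
    then show ?thesis
      by simp
  qed
  then show ?thesis
    using False by (simp add: stopped_at_def)
qed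

lemma length_pfx [simp]: "length (pfx \<omega> n) = n"
  by (simp add: pfx_def)

lemma take_pfx: "k \<le> n \<Longrightarrow> take k (pfx \<omega> n) = pfx \<omega> k"
  by (simp add: pfx_def take_map min_def)

text \<open>T stopped on first reaching S, divided by c, is a supermartingale that is eventually
  at least 1 on every path through S and starts at 1/c.\<close>

lemma upper_prob_le_inverse:
  assumes fs: "forecasting_system \<phi>" and T: "test_supermartingale \<phi> T" and c: "c > 0"
    and S: "\<And>s. s \<in> S \<Longrightarrow> c \<le> T s" and G: "G \<subseteq> cyl S"
  shows "upper_prob \<phi> G \<le> ereal (1 / c)"
proof -
  define M where "M s = T (stopped_at S s) / c" for s
  have T_nonneg: "T s \<ge> 0" for s
    using T unfolding test_supermartingale_def by auto
  have T_super: "upper_E (\<phi> s) (\<lambda>x. T (s @ [x])) \<le> T s" for s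
    using T unfolding test_supermartingale_def supermartingale_def by auto
  have "supermartingale \<phi> M"
    unfolding supermartingale_def
  proof
    fix s
    show "upper_E (\<phi> s) (\<lambda>x. M (s @ [x])) \<le> M s"
    proof (cases "has_prefix_in S s")
      case True
      then show ?thesis
        by (simp add: M_def stopped_at_snoc upper_E_const[OF fs])
    next
      case False
      then have "M s = T s / c"
        by (simp add: M_def stopped_at_def)
      with False show ?thesis
        using T_super[of s] c by (simp add: M_def stopped_at_snoc upper_E_divide[OF fs c] divide_right_mono)
    qed
  qed
  moreover have "liminf (\<lambda>n. ereal (M (pfx \<omega> n))) \<ge> ereal (indicator G \<omega>)" for \<omega>
  proof (cases "\<omega> \<in> G")
    case True
    then obtain s where s: "s \<in> S" "pfx \<omega> (length s) = s"
      using G unfolding cyl_def by auto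
    have "M (pfx \<omega> n) \<ge> 1" if n: "length s \<le> n" for n
    proof -
      have reach: "has_prefix_in S (pfx \<omega> n)"
        unfolding has_prefix_in_def using s n take_pfx[OF n] by (intro exI[of _ "length s"]) auto
      then have "T (stopped_at S (pfx \<omega> n)) \<ge> c"
        using S has_prefix_in_Least[OF reach] by (simp add: stopped_at_def)
      then show ?thesis
        using c by (simp add: M_def)
    qed
    then have "eventually (\<lambda>n. ereal 1 \<le> ereal (M (pfx \<omega> n))) sequentially"
      unfolding eventually_sequentially by auto
    then show ?thesis
      using True by (simp add: Liminf_bounded)
  next
    case False
    have "eventually (\<lambda>n. ereal 0 \<le> ereal (M (pfx \<omega> n))) sequentially"
      using T_nonneg c by (simp add: M_def)
    then show ?thesis
      using False by (simp add: Liminf_bounded)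
  qed
  ultimately have "upper_prob \<phi> G \<le> ereal (M [])"
    unfolding upper_prob_def by (intro Inf_lower) blast
  moreover have "M [] = 1 / c"
    using T by (simp add: M_def stopped_at_def has_prefix_in_def test_supermartingale_def)
  ultimately show ?thesis
    by simp
qed

subsection \<open>The Schnorr test built from a test supermartingale\<close>

text \<open>Here h [str_enc s, 2] approximates T s within 1/4: membership of (n, s) forces
  T s \<ge> \<rho> |s| - 3/4 \<ge> 2^n, while T s > \<rho> |s| \<ge> 2^n + 1 forces membership.\<close>

definition threshold_test :: "(nat list \<Rightarrow> nat) \<Rightarrow> (nat \<Rightarrow> nat) \<Rightarrow> (nat \<times> bool list) set" where
  "threshold_test h \<rho> = {(n, s). 2 ^ n + 1 \<le> \<rho> (length s) \<and>
      real (\<rho> (length s)) - 1/2 \<le> rat_dec (h [str_enc s, 2])}"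

lemma recursive_set_threshold_test:
  assumes h: "recursive_fn 2 h" and \<rho>: "recursive_fn 1 (\<lambda>xs. \<rho> (xs ! 0))"
  shows "recursive_set (threshold_test h \<rho>)"
proof -
  define r where "r xs = \<rho> (code_length (xs ! 1))" for xs :: "nat list"
  define a where "a xs = fst (prod_decode (h [xs ! 1, 2]))" for xs :: "nat list"
  define b where "b xs = snd (prod_decode (h [xs ! 1, 2]))" for xs :: "nat list"
  have "recursive_fn 2 r"
    unfolding r_def using recursive_fn_comp1[OF \<rho> recursive_fn_code_length[OF recursive_fn_proj]]
    by simp
  moreover have "recursive_fn 2 (\<lambda>xs. h [xs ! 1, 2])"
    by (intro recursive_fn_comp2[OF h] recursive_fn_proj recursive_fn_const) simp
  then have "recursive_fn 2 a" "recursive_fn 2 b"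
    unfolding a_def b_def by (rule recursive_fn_prod_decode)+
  ultimately have "recursive_fn 2 (\<lambda>xs. if 2 ^ (xs ! 0) + 1 \<le> r xs \<and>
      (even (a xs) \<and> 2 * r xs * (b xs + 1) \<le> a xs + b xs + 1) then 1 else 0)"
    by (intro recursive_fn_if_conj recursive_fn_if_le recursive_fn_if_even recursive_fn_add
        recursive_fn_mult recursive_fn_power2 recursive_fn_proj recursive_fn_const) simp_all
  then show ?thesis
    unfolding recursive_set_def
  proof (rule recursive_fn_cong)
    fix xs :: "nat list"
    assume "length xs = 2"
    then obtain n x where xs: "xs = [n, x]"
      by (metis (no_types, opaque_lifting) Suc_length_conv length_0_conv numeral_2_eq_2)
    obtain s where x: "x = str_enc s"
      using surj_str_enc by (metis surjD)
    let ?m = "h [str_enc s, 2]"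
    have "(xs ! 0, inv str_enc (xs ! 1)) \<in> threshold_test h \<rho> \<longleftrightarrow>
        2 ^ n + 1 \<le> \<rho> (length s) \<and> real (\<rho> (length s)) - 1/2 \<le> rat_dec ?m"
      by (simp add: threshold_test_def xs x inv_f_f[OF inj_str_enc])
    also have "\<dots> \<longleftrightarrow> 2 ^ n + 1 \<le> \<rho> (length s) \<and> (even (fst (prod_decode ?m)) \<and>
        2 * \<rho> (length s) * (snd (prod_decode ?m) + 1) \<le> fst (prod_decode ?m) + snd (prod_decode ?m) + 1)"
      using half_below_rat_dec_iff[of "\<rho> (length s)" ?m] by auto
    finally show "(if 2 ^ (xs ! 0) + 1 \<le> r xs \<and> (even (a xs) \<and> 2 * r xs * (b xs + 1) \<le> a xs + b xs + 1)
        then 1 else 0) = (if (xs ! 0, inv str_enc (xs ! 1)) \<in> threshold_test h \<rho> then 1 else 0)"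
      by (simp add: r_def a_def b_def xs x code_length_str_enc)
  qed
qed

lemma threshold_test_lower_bound:
  assumes "(n, s) \<in> threshold_test h \<rho>" and "\<bar>t - rat_dec (h [str_enc s, 2])\<bar> \<le> 1/4"
  shows "2 ^ n + 1 \<le> \<rho> (length s)" "real (\<rho> (length s)) - 3/4 \<le> t"
  using assms unfolding threshold_test_def abs_le_iff by auto

lemma schnorr_test_threshold_test:
  assumes fs: "forecasting_system \<phi>" and T: "test_supermartingale \<phi> T"
    and h: "recursive_fn 2 h" and approx: "\<And>s. \<bar>T s - rat_dec (h [str_enc s, 2])\<bar> \<le> 1/4"
    and \<rho>: "growth_function \<rho>"
  shows "schnorr_test \<phi> (threshold_test h \<rho>)"
proof -
  let ?A = "threshold_test h \<rho>"
  define e where "e N n = (LEAST l. 2 ^ N + 1 \<le> \<rho> l)" for N n :: nat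
  have \<rho>_rec: "recursive_fn 1 (\<lambda>xs. \<rho> (xs ! 0))" and "mono \<rho>" and \<rho>_unbounded: "\<forall>B. \<exists>n. \<rho> n > B"
    using \<rho> unfolding growth_function_def by auto
  have e_ex: "\<exists>l. 2 ^ N + 1 \<le> \<rho> l" for N :: nat
    using \<rho>_unbounded by (metis Suc_eq_plus1 Suc_leI)
  have e_bound: "2 ^ N + 1 \<le> \<rho> l" if "e N n \<le> l" for N n l
    using LeastI_ex[OF e_ex[of N]] \<open>mono \<rho>\<close>[THEN monoD, OF that] unfolding e_def by linarith
  have "recursive_fn (Suc 2) (\<lambda>ys. 2 ^ (ys ! 1) + 1)"
    by (intro recursive_fn_add recursive_fn_power2 recursive_fn_proj recursive_fn_const) simp
  moreover have "recursive_fn (Suc 2) (\<lambda>ys. \<rho> (ys ! 0))"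
    using recursive_fn_comp1[OF \<rho>_rec recursive_fn_proj[of 0 "Suc 2"]] by simp
  ultimately have "recursive_fn2 e"
    using recursive_fn_Least_le[of 2 "\<lambda>ys. 2 ^ (ys ! 1) + 1" "\<lambda>ys. \<rho> (ys ! 0)"] e_ex
    unfolding recursive_fn2_def e_def by simp
  moreover have "upper_prob \<phi> (cyl (sect ?A n)) \<le> ereal ((1/2) ^ n)" for n
  proof -
    have "2 ^ n \<le> T s" if "s \<in> sect ?A n" for s
    proof -
      have "(n, s) \<in> ?A"
        using that by (simp add: sect_def)
      note bounds = threshold_test_lower_bound[OF this approx[of s]]
      have "real (2 ^ n + 1) \<le> real (\<rho> (length s))"
        using bounds(1) by (simp only: of_nat_le_iff)
      with bounds(2) show ?thesis
        by simp
    qed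
    then show ?thesis
      using upper_prob_le_inverse[OF fs T, of "2 ^ n" "sect ?A n"] by (simp add: power_one_over)
  qed
  moreover have "upper_prob \<phi> (cyl (sect ?A n) - cyl (sect_lt ?A n l)) \<le> ereal ((1/2) ^ N)"
    if "e N n \<le> l" for N n l
  proof -
    define S where "S = {s \<in> sect ?A n. l \<le> length s}"
    have "cyl (sect ?A n) - cyl (sect_lt ?A n l) \<subseteq> cyl S"
      unfolding cyl_def S_def sect_def sect_lt_def by force
    moreover have "2 ^ N \<le> T s" if "s \<in> S" for s
    proof -
      have "(n, s) \<in> ?A" "e N n \<le> length s"
        using that \<open>e N n \<le> l\<close> by (simp_all add: S_def sect_def)
      have "real (2 ^ N + 1) \<le> real (\<rho> (length s))"
        using e_bound[OF \<open>e N n \<le> length s\<close>] by (simp only: of_nat_le_iff)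
      with threshold_test_lower_bound(2)[OF \<open>(n, s) \<in> ?A\<close> approx] show ?thesis
        by simp
    qed
    ultimately show ?thesis
      using upper_prob_le_inverse[OF fs T, of "2 ^ N" S] by (simp add: power_one_over)
  qed
  ultimately show ?thesis
    unfolding schnorr_test_def using recursive_set_threshold_test[OF h \<rho>_rec] by blast
qed

lemma limsup_pos_imp_mem_threshold_test:
  assumes approx: "\<And>s. \<bar>T s - rat_dec (h [str_enc s, 2])\<bar> \<le> 1/4"
    and "mono \<rho>" and \<rho>_unbounded: "\<forall>B. \<exists>n. \<rho> n > B"
    and not_le: "\<not> limsup (\<lambda>n. ereal (T (pfx \<omega> n) - real (\<rho> n))) \<le> 0"
  shows "\<omega> \<in> (\<Inter>n. cyl (sect (threshold_test h \<rho>) n))"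
proof -
  have frequently: "\<exists>m\<ge>K. T (pfx \<omega> m) > real (\<rho> m)" for K
  proof (rule ccontr)
    assume "\<not> (\<exists>m\<ge>K. T (pfx \<omega> m) > real (\<rho> m))"
    then have "eventually (\<lambda>m. ereal (T (pfx \<omega> m) - real (\<rho> m)) \<le> 0) sequentially"
      unfolding eventually_sequentially by (intro exI[of _ K]) auto
    then have "limsup (\<lambda>n. ereal (T (pfx \<omega> n) - real (\<rho> n))) \<le> 0"
      by (rule Limsup_bounded)
    with not_le show False
      by contradiction
  qed
  have "\<omega> \<in> cyl (sect (threshold_test h \<rho>) n)" for n
  proof -
    obtain K where K: "\<rho> K > 2 ^ n"
      using \<rho>_unbounded by blast
    obtain m where m: "K \<le> m" "T (pfx \<omega> m) > real (\<rho> m)"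
      using frequently by blast
    have "2 ^ n + 1 \<le> \<rho> m"
      using K \<open>mono \<rho>\<close>[THEN monoD, OF m(1)] by simp
    moreover have "real (\<rho> m) - 1/2 \<le> rat_dec (h [str_enc (pfx \<omega> m), 2])"
      using approx[of "pfx \<omega> m"] m(2) unfolding abs_le_iff by linarith
    ultimately have "(n, pfx \<omega> m) \<in> threshold_test h \<rho>"
      by (simp add: threshold_test_def)
    then show ?thesis
      unfolding cyl_def sect_def by (intro CollectI bexI[of _ "pfx \<omega> m"]) auto
  qed
  then show ?thesis
    by blast
qed

theorem proposition8p1:
  fixes \<phi> :: "bool list \<Rightarrow> real set" and \<omega> :: "nat \<Rightarrow> bool"
  assumes "forecasting_system \<phi>"
    and "schnorr_test_random \<phi> \<omega>"
  shows "schnorr_random \<phi> \<omega>"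
proof (rule ccontr)
  assume "\<not> schnorr_random \<phi> \<omega>"
  then obtain T \<rho> where T: "test_supermartingale \<phi> T" and "computable_real_map T"
    and \<rho>: "growth_function \<rho>" and not_le: "\<not> limsup (\<lambda>n. ereal (T (pfx \<omega> n) - real (\<rho> n))) \<le> 0"
    unfolding schnorr_random_def by blast
  then obtain h where h: "recursive_fn 2 h"
    and h_approx: "\<And>s N. \<bar>T s - rat_dec (h [str_enc s, N])\<bar> \<le> (1/2) ^ N"
    unfolding computable_real_map_def by blast
  have approx: "\<bar>T s - rat_dec (h [str_enc s, 2])\<bar> \<le> 1/4" for s
    using h_approx[of s 2] by (simp add: power2_eq_square)
  have "schnorr_test \<phi> (threshold_test h \<rho>)"
    using assms(1) T h approx \<rho> by (rule schnorr_test_threshold_test)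
  moreover have "mono \<rho>" "\<forall>B. \<exists>n. \<rho> n > B"
    using \<rho> unfolding growth_function_def by auto
  then have "\<omega> \<in> (\<Inter>n. cyl (sect (threshold_test h \<rho>) n))"
    using approx not_le limsup_pos_imp_mem_threshold_test by blast
  ultimately show False
    using assms(2) unfolding schnorr_test_random_def by blast
qed

end
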